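(* Let $G,G'$ be finitely generated groups with word metrics $d,d'$ (from Cayley graphs with respect to finite generating sets), let $v_n$ and $v'_n$ be the cardinalities of the balls of radius $n$ around the identity in $G$ and $G'$, let $a:=\lim_n v_n^{1/n}$ and $a':=\lim_n (v'_n)^{1/n}$ be the growth rates, assume $a>1$ and $a'>1$, and set $c:=\log a/\log a'$. Then there exist a non-decreasing function $f:\mathbb Z_{\ge0}\to\mathbb Z_{\ge0}$ and a strictly increasing sequence $(r_j)_{j}$ in $\mathbb Z_{\ge0}$ such that, writing $r'_j:=f(r_j)$, $f(0)=0$, $\sup_n v'_{r'_n}/v_{r_n}<\infty$, $\inf_n v'_{r'_n}/v_{r_n}>0$, and $$\forall m\ \exists N\ \forall n\ge N:\quad |f(n+m)-f(n)-cm|\le 1.$$ *)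

theory Defs
  imports "HOL-Analysis.Analysis" "HOL-Algebra.Group" "HOL-Algebra.Generated_Groups"
begin

definition fin_gen_set :: "('a, 'b) monoid_scheme \<Rightarrow> 'a set \<Rightarrow> bool" where
  "fin_gen_set G S \<longleftrightarrow> finite S \<and> S \<subseteq> carrier G \<and> generate G S = carrier G"

definition word_ball :: "('a, 'b) monoid_scheme \<Rightarrow> 'a set \<Rightarrow> nat \<Rightarrow> 'a set" where
  "word_ball G S n = {x. \<exists>ws. length ws \<le> n \<and> set ws \<subseteq> S \<union> (m_inv G ` S)
        \<and> x = foldr (\<lambda>u y. u \<otimes>\<^bsub>G\<^esub> y) ws \<one>\<^bsub>G\<^esub>}"

definition ball_card :: "('a, 'b) monoid_scheme \<Rightarrow> 'a set \<Rightarrow> nat \<Rightarrow> nat" where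
  "ball_card G S n = card (word_ball G S n)"

definition growth_rate :: "('a, 'b) monoid_scheme \<Rightarrow> 'a set \<Rightarrow> real" where
  "growth_rate G S = lim (\<lambda>n. root n (real (ball_card G S n)))"

end

theory Submission
  imports Defs
begin

text \<open>Write \<open>v\<^sub>n\<close>, \<open>v'\<^sub>n\<close> for the ball sizes. They are submultiplicative, so by Fekete's lemma
  \<open>ln v\<^sub>n / n \<rightarrow> ln a\<close> and \<open>ln v'\<^sub>n / n \<rightarrow> ln a'\<close>. Let \<open>s r\<close> be the least radius with
  \<open>v'\<^bsub>s r\<^esub> \<ge> v\<^sub>r\<close>; as \<open>v'\<^bsub>t+1\<^esub> \<le> v'\<^sub>1 v'\<^sub>t\<close>, this gives \<open>v\<^sub>r \<le> v'\<^bsub>s r\<^esub> \<le> v'\<^sub>1 v\<^sub>r\<close>, and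
  comparing logarithms gives \<open>s r / r \<rightarrow> c\<close>. The error \<open>e r = s r - c r\<close> is thus \<open>o(r)\<close>, but \<open>s\<close>
  itself may be irregular. Interpolating \<open>e\<close> linearly between very sparse knots \<open>r\<^sub>j\<close> gives \<open>g\<close>
  with \<open>g r\<^sub>j = e r\<^sub>j\<close> whose increments tend to \<open>0\<close> and stay above \<open>-c\<close>. Then
  \<open>f n = \<lfloor>c n + g n\<rfloor>\<close> is non-decreasing, equals \<open>s\<close> at the knots, and
  \<open>\<bar>f (n + m) - f n - c m\<bar> \<le> 1\<close> once \<open>g (n + m) - g n\<close> is small enough.\<close>

definition word_eval :: "('a, 'b) monoid_scheme \<Rightarrow> 'a list \<Rightarrow> 'a" where
  "word_eval G ws = foldr (\<lambda>u y. u \<otimes>\<^bsub>G\<^esub> y) ws \<one>\<^bsub>G\<^esub>"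

lemma word_eval_Nil [simp]: "word_eval G [] = \<one>\<^bsub>G\<^esub>"
  and word_eval_Cons [simp]: "word_eval G (u # ws) = u \<otimes>\<^bsub>G\<^esub> word_eval G ws"
  by (simp_all add: word_eval_def)

lemma word_ball_eq_image:
  "word_ball G S n = word_eval G ` {ws. set ws \<subseteq> S \<union> m_inv G ` S \<and> length ws \<le> n}"
  unfolding word_ball_def word_eval_def by blast

lemma word_ball_0: "word_ball G S 0 = {\<one>\<^bsub>G\<^esub>}"
  by (auto simp: word_ball_eq_image)

lemma ball_card_0: "ball_card G S 0 = 1"
  by (simp add: ball_card_def word_ball_0)

lemma word_ball_mono: "m \<le> n \<Longrightarrow> word_ball G S m \<subseteq> word_ball G S n"
  unfolding word_ball_eq_image by auto

context group
begin

lemma word_eval_closed: "set ws \<subseteq> carrier G \<Longrightarrow> word_eval G ws \<in> carrier G"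
  by (induction ws) auto

lemma word_eval_append:
  "set ws \<subseteq> carrier G \<Longrightarrow> set vs \<subseteq> carrier G
    \<Longrightarrow> word_eval G (ws @ vs) = word_eval G ws \<otimes> word_eval G vs"
  by (induction ws) (auto simp: word_eval_closed m_assoc)

lemma letters_subset_carrier: "fin_gen_set G S \<Longrightarrow> S \<union> m_inv G ` S \<subseteq> carrier G"
  by (auto simp: fin_gen_set_def)

lemma finite_word_ball:
  assumes "fin_gen_set G S"
  shows "finite (word_ball G S n)"
  unfolding word_ball_eq_image
proof (intro finite_imageI finite_lists_length_le)
  show "finite (S \<union> m_inv G ` S)" using assms by (simp add: fin_gen_set_def)
qed

lemma ball_card_pos: "fin_gen_set G S \<Longrightarrow> 1 \<le> ball_card G S n"
  using finite_word_ball word_ball_mono[of 0 n G S]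
  by (fastforce simp: ball_card_def word_ball_0 Suc_le_eq card_gt_0_iff)

lemma mono_ball_card: "fin_gen_set G S \<Longrightarrow> mono (ball_card G S)"
  by (intro monoI) (simp add: ball_card_def card_mono finite_word_ball word_ball_mono)

lemma word_ball_add_subset:
  assumes "fin_gen_set G S"
  shows "word_ball G S (m + n) \<subseteq> (\<lambda>(x, y). x \<otimes> y) ` (word_ball G S m \<times> word_ball G S n)"
proof
  fix x assume "x \<in> word_ball G S (m + n)"
  then obtain ws where ws: "set ws \<subseteq> S \<union> m_inv G ` S" "length ws \<le> m + n" "x = word_eval G ws"
    by (auto simp: word_ball_eq_image)
  have letters: "set (take m ws) \<subseteq> S \<union> m_inv G ` S" "set (drop m ws) \<subseteq> S \<union> m_inv G ` S"
    using ws(1) set_take_subset set_drop_subset by fast+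
  with letters_subset_carrier[OF assms] have "x = word_eval G (take m ws) \<otimes> word_eval G (drop m ws)"
    using ws(3) word_eval_append[of "take m ws" "drop m ws"] by auto
  moreover have "word_eval G (take m ws) \<in> word_ball G S m" "word_eval G (drop m ws) \<in> word_ball G S n"
    using letters ws(2) by (auto simp: word_ball_eq_image)
  ultimately show "x \<in> (\<lambda>(x, y). x \<otimes> y) ` (word_ball G S m \<times> word_ball G S n)"
    by force
qed

lemma ball_card_add_le:
  assumes "fin_gen_set G S"
  shows "ball_card G S (m + n) \<le> ball_card G S m * ball_card G S n"
proof -
  have fin: "finite (word_ball G S m \<times> word_ball G S n)"
    using finite_word_ball[OF assms] by blast
  have "ball_card G S (m + n) \<le> card ((\<lambda>(x, y). x \<otimes> y) ` (word_ball G S m \<times> word_ball G S n))"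
    unfolding ball_card_def using fin by (intro card_mono word_ball_add_subset assms) auto
  also have "\<dots> \<le> card (word_ball G S m \<times> word_ball G S n)"
    using fin by (rule card_image_le)
  finally show ?thesis by (simp add: ball_card_def card_cartesian_product)
qed

end

lemma subadditive_iterate:
  fixes u :: "nat \<Rightarrow> real"
  assumes sub: "\<And>m n. u (m + n) \<le> u m + u n"
  shows "u (q * k + r) \<le> real q * u k + u r"
proof (induction q)
  case (Suc q)
  have "u (Suc q * k + r) \<le> u k + u (q * k + r)"
    using sub[of k "q * k + r"] by (simp add: add.assoc)
  with Suc show ?case by (simp add: algebra_simps)
qed simp

lemma subadditive_quotient_le:
  fixes u :: "nat \<Rightarrow> real"
  assumes nonneg: "\<And>n. 0 \<le> u n" and sub: "\<And>m n. u (m + n) \<le> u m + u n"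
    and "0 < k" "0 < n"
  shows "u n / n \<le> u k / k + (\<Sum>i<k. u i) / n"
proof -
  have "u n \<le> real (n div k) * u k + u (n mod k)"
    using subadditive_iterate[OF sub, of "n div k" k "n mod k"] by simp
  also have "real (n div k) * u k \<le> real n / real k * u k"
    by (intro mult_right_mono of_nat_div_le_of_nat nonneg)
  also have "u (n mod k) \<le> (\<Sum>i<k. u i)"
    using \<open>0 < k\<close> by (intro member_le_sum nonneg) auto
  finally show ?thesis
    using \<open>0 < n\<close> by (simp add: field_simps)
qed

lemma fekete_subadditive:
  fixes u :: "nat \<Rightarrow> real"
  assumes nonneg: "\<And>n. 0 \<le> u n" and sub: "\<And>m n. u (m + n) \<le> u m + u n"
  shows "(\<lambda>n. u n / n) \<longlonglongrightarrow> (INF n\<in>{1..}. u n / n)"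
proof -
  let ?L = "INF n\<in>{1..}. u n / n"
  have bdd: "bdd_below ((\<lambda>n. u n / n) ` {1..})"
    by (rule bdd_belowI[of _ 0]) (auto simp: nonneg)
  show ?thesis
  proof (rule order_tendstoI)
    fix a
    assume "a < ?L"
    have "?L \<le> u n / n" if "n \<ge> 1" for n
      using that by (intro cINF_lower bdd) auto
    with \<open>a < ?L\<close> show "\<forall>\<^sub>F n in sequentially. a < u n / n"
      by (intro eventually_mono[OF eventually_ge_at_top[of 1]]) (auto intro: less_le_trans)
  next
    fix a
    assume "?L < a"
    then obtain k where k: "k \<ge> 1" "u k / k < a"
      by (subst (asm) cINF_less_iff[OF _ bdd]) auto
    have "(\<lambda>n. (\<Sum>i<k. u i) / real n) \<longlonglongrightarrow> 0"
      by (rule lim_const_over_n)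
    then have "\<forall>\<^sub>F n in sequentially. (\<Sum>i<k. u i) / n < a - u k / k"
      using k(2) by (intro order_tendstoD(2)) auto
    then show "\<forall>\<^sub>F n in sequentially. u n / n < a"
      using eventually_ge_at_top[of 1]
    proof eventually_elim
      case (elim n)
      have "u n / n \<le> u k / k + (\<Sum>i<k. u i) / n"
        using elim k(1) by (intro subadditive_quotient_le[OF nonneg sub]) auto
      with elim show ?case
        by linarith
    qed
  qed
qed

lemma submultiplicative_ln_rate:
  fixes v :: "nat \<Rightarrow> nat"
  assumes pos: "\<And>n. 1 \<le> v n" and submult: "\<And>m n. v (m + n) \<le> v m * v n"
  shows "(\<lambda>n. ln (v n) / n) \<longlonglongrightarrow> ln (lim (\<lambda>n. root n (v n)))"
proof -
  define L where "L = (INF n\<in>{1..}. ln (real (v n)) / n)"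
  have "ln (v (m + n)) \<le> ln (v m) + ln (v n)" for m n
  proof -
    have "real (v (m + n)) \<le> real (v m) * real (v n)"
      by (metis submult of_nat_le_iff of_nat_mult)
    then have "ln (v (m + n)) \<le> ln (real (v m) * real (v n))"
      using pos[of "m + n"] by (intro ln_mono) auto
    then show ?thesis
      using pos[of m] pos[of n] by (simp add: ln_mult)
  qed
  then have lim: "(\<lambda>n. ln (v n) / n) \<longlonglongrightarrow> L"
    unfolding L_def by (intro fekete_subadditive) (use pos in auto)
  have "(\<lambda>n. root n (v n)) \<longlonglongrightarrow> exp L"
  proof (rule Lim_transform_eventually)
    show "(\<lambda>n. exp (ln (v n) / n)) \<longlonglongrightarrow> exp L"
      by (intro tendsto_exp lim)
    show "\<forall>\<^sub>F n in sequentially. exp (ln (v n) / n) = root n (v n)"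
      using eventually_gt_at_top[of 0]
      by eventually_elim (use pos in \<open>simp add: Suc_le_eq root_powr_inverse powr_def\<close>)
  qed
  then have "lim (\<lambda>n. root n (v n)) = exp L"
    by (rule limI)
  with lim show ?thesis
    by simp
qed

lemma (in group) ln_ball_card_rate:
  assumes "fin_gen_set G S"
  shows "(\<lambda>n. ln (ball_card G S n) / n) \<longlonglongrightarrow> ln (growth_rate G S)"
  unfolding growth_rate_def
  using ball_card_pos[OF assms] ball_card_add_le[OF assms] by (rule submultiplicative_ln_rate)

lemma ln_rate_pos_imp_unbounded:
  fixes w :: "nat \<Rightarrow> nat"
  assumes pos: "\<And>n. 1 \<le> w n" and rate: "(\<lambda>n. ln (w n) / n) \<longlonglongrightarrow> \<gamma>" and "0 < \<gamma>"
  shows "filterlim (\<lambda>n. real (w n)) at_top sequentially"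
proof (rule filterlim_at_top_mono)
  show "filterlim (\<lambda>n. ln (w n) / n * n) at_top sequentially"
    by (rule filterlim_tendsto_pos_mult_at_top[OF rate \<open>0 < \<gamma>\<close> filterlim_real_sequentially])
  have "ln (w n) / n * n \<le> w n" for n
    using ln_le_minus_one[of "w n"] pos[of n] by (cases "n = 0") auto
  then show "\<forall>\<^sub>F n in sequentially. ln (w n) / n * n \<le> w n"
    by simp
qed

lemma ln_rate_pos_reaches:
  fixes w :: "nat \<Rightarrow> nat"
  assumes "\<And>n. 1 \<le> w n" and "(\<lambda>n. ln (w n) / n) \<longlonglongrightarrow> \<gamma>" and "0 < \<gamma>"
  shows "\<exists>t. x \<le> w t"
proof -
  have "\<forall>\<^sub>F t in sequentially. real x \<le> w t"
    using ln_rate_pos_imp_unbounded[OF assms] unfolding filterlim_at_top by blast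
  then obtain t where "real x \<le> w t"
    using eventually_happens'[OF sequentially_bot] by blast
  then show ?thesis
    by auto
qed

lemma ln_rate_bounded_ratio:
  fixes u v :: "nat \<Rightarrow> nat"
  assumes pos: "\<And>n. 1 \<le> v n" and lower: "\<And>n. v n \<le> u n" and upper: "\<And>n. u n \<le> K * v n"
    and rate: "(\<lambda>n. ln (v n) / n) \<longlonglongrightarrow> \<alpha>"
  shows "(\<lambda>n. ln (u n) / n) \<longlonglongrightarrow> \<alpha>"
proof -
  have gap: "0 \<le> ln (u n) - ln (v n)" "ln (u n) - ln (v n) \<le> ln K" for n
  proof -
    have le: "real (v n) \<le> real (u n)" "real (u n) \<le> real K * real (v n)"
      by (metis lower of_nat_le_iff) (metis upper of_nat_le_iff of_nat_mult)
    have "K \<noteq> 0"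
      using pos[of n] lower[of n] upper[of n] by (cases K) auto
    show "0 \<le> ln (u n) - ln (v n)"
      using le pos[of n] by simp
    have "ln (u n) \<le> ln (real K * real (v n))"
      using le pos[of n] lower[of n] by (intro ln_mono) auto
    then show "ln (u n) - ln (v n) \<le> ln K"
      using \<open>K \<noteq> 0\<close> pos[of n] by (simp add: ln_mult)
  qed
  have "(\<lambda>n. (ln (u n) - ln (v n)) / n) \<longlonglongrightarrow> 0"
  proof (rule tendsto_sandwich[where f = "\<lambda>_. 0 :: real" and h = "\<lambda>n. ln (real K) / real n"])
    show "\<forall>\<^sub>F n in sequentially. 0 \<le> (ln (u n) - ln (v n)) / n"
      using gap by simp
    show "\<forall>\<^sub>F n in sequentially. (ln (u n) - ln (v n)) / n \<le> ln K / n"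
      using gap by (simp add: divide_right_mono)
  qed (auto intro: lim_const_over_n)
  from tendsto_add[OF rate this] show ?thesis
    by (simp add: diff_divide_distrib)
qed

lemma matched_index_ratio:
  fixes v w s :: "nat \<Rightarrow> nat"
  assumes v_pos: "\<And>n. 1 \<le> v n" and w_pos: "\<And>n. 1 \<le> w n"
    and lower: "\<And>r. v r \<le> w (s r)" and upper: "\<And>r. w (s r) \<le> K * v r"
    and s_unbounded: "filterlim s at_top sequentially"
    and v_rate: "(\<lambda>n. ln (v n) / n) \<longlonglongrightarrow> \<alpha>"
    and w_rate: "(\<lambda>n. ln (w n) / n) \<longlonglongrightarrow> \<beta>" "0 < \<beta>"
  shows "(\<lambda>r. s r / r) \<longlonglongrightarrow> \<alpha> / \<beta>"
proof -
  have "(\<lambda>r. ln (w (s r)) / r) \<longlonglongrightarrow> \<alpha>"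
    using v_pos lower upper v_rate by (rule ln_rate_bounded_ratio)
  moreover have "(\<lambda>r. ln (w (s r)) / s r) \<longlonglongrightarrow> \<beta>"
    using s_unbounded by (rule filterlim_compose[OF w_rate(1)])
  ultimately have "(\<lambda>r. (ln (w (s r)) / r) / (ln (w (s r)) / s r)) \<longlonglongrightarrow> \<alpha> / \<beta>"
    using w_rate(2) by (intro tendsto_divide) auto
  moreover have "\<forall>\<^sub>F r in sequentially. 2 \<le> real (w (s r))"
    using filterlim_compose[OF ln_rate_pos_imp_unbounded[OF w_pos w_rate] s_unbounded]
    unfolding filterlim_at_top by blast
  then have "\<forall>\<^sub>F r in sequentially. (ln (w (s r)) / r) / (ln (w (s r)) / s r) = s r / r"
  proof eventually_elim
    case (elim r)
    then have "0 < ln (w (s r))"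
      by (intro ln_gt_zero) linarith
    then show ?case
      by (simp add: divide_simps)
  qed
  ultimately show ?thesis
    by (rule Lim_transform_eventually)
qed

text \<open>If \<open>w\<close> never reaches \<open>x\<close>, \<open>catch_up w x\<close> is an unspecified \<open>LEAST\<close> over the empty set;
  the lemmas below therefore assume that \<open>x\<close> is reached.\<close>

definition catch_up :: "(nat \<Rightarrow> nat) \<Rightarrow> nat \<Rightarrow> nat" where
  "catch_up w x = (LEAST s. x \<le> w s)"

lemma catch_up_reaches: "x \<le> w s \<Longrightarrow> x \<le> w (catch_up w x)"
  unfolding catch_up_def by (rule LeastI)

lemma catch_up_eq_0: "x \<le> w 0 \<Longrightarrow> catch_up w x = 0"
  unfolding catch_up_def by (rule Least_eq_0)

lemma catch_up_overshoot:
  assumes step: "\<And>n. w (Suc n) \<le> K * w n" and "w 0 \<le> K" and "1 \<le> x"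
  shows "w (catch_up w x) \<le> K * x"
proof (cases "catch_up w x")
  case 0
  have "K * 1 \<le> K * x"
    using \<open>1 \<le> x\<close> by (rule mult_le_mono2)
  with 0 \<open>w 0 \<le> K\<close> show ?thesis
    by (metis le_trans mult.right_neutral)
next
  case (Suc t)
  then have "w t < x"
    unfolding catch_up_def by (metis lessI not_less_Least not_le)
  with Suc step[of t] show ?thesis
    by (metis le_trans less_imp_le mult_le_mono2)
qed

lemma filterlim_catch_up:
  fixes v w :: "nat \<Rightarrow> nat"
  assumes "mono w" and reach: "\<And>x. \<exists>t. x \<le> w t"
    and v_unbounded: "filterlim (\<lambda>r. real (v r)) at_top sequentially"
  shows "filterlim (\<lambda>r. catch_up w (v r)) at_top sequentially"
  unfolding filterlim_at_top
proof
  fix t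
  show "\<forall>\<^sub>F r in sequentially. t \<le> catch_up w (v r)"
    using v_unbounded[unfolded filterlim_at_top, rule_format, of "w t + 1"]
  proof eventually_elim
    case (elim r)
    obtain t' where "v r \<le> w t'"
      using reach by blast
    then have "v r \<le> w (catch_up w (v r))"
      by (rule catch_up_reaches)
    moreover have "w t < v r"
      using elim by simp
    ultimately show ?case
      using monoD[OF \<open>mono w\<close>, of "catch_up w (v r)" t] by linarith
  qed
qed

text \<open>\<open>interp\<close> interpolates \<open>e\<close> linearly between consecutive knots. Each knot is more than twice
  the previous one and \<open>e\<close> is tiny relative to it at both ends, which makes the slopes tend to \<open>0\<close>.\<close>

locale piecewise_linear_interpolation =
  fixes e :: "nat \<Rightarrow> real" and \<delta> :: real
  assumes delta_pos: "0 < \<delta>" and sublinear: "(\<lambda>n. e n / n) \<longlonglongrightarrow> 0"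
begin

lemma next_knot_exists:
  "\<exists>y. 2 * x < y \<and> \<bar>e y\<bar> \<le> \<delta> / (4 * Suc j) * y \<and> \<bar>e x\<bar> \<le> \<delta> / (4 * Suc j) * y"
proof -
  define d where "d = \<delta> / (4 * Suc j)"
  have "0 < d"
    using delta_pos by (simp add: d_def)
  have "\<forall>\<^sub>F y in sequentially. \<bar>e y / y\<bar> < d"
    using sublinear \<open>0 < d\<close> by (auto simp: tendsto_iff dist_real_def)
  moreover have "\<forall>\<^sub>F y in sequentially. \<bar>e x\<bar> / d \<le> real y"
    using filterlim_real_sequentially by (simp add: filterlim_at_top)
  ultimately have "\<forall>\<^sub>F y in sequentially. 2 * x < y \<and> \<bar>e y\<bar> \<le> d * y \<and> \<bar>e x\<bar> \<le> d * y"
    using eventually_gt_at_top[of "2 * x"]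
  proof eventually_elim
    case (elim y)
    then show ?case
      using \<open>0 < d\<close> by (simp add: abs_divide field_simps)
  qed
  then show ?thesis
    unfolding d_def using eventually_happens'[OF sequentially_bot] by blast
qed

primrec knot :: "nat \<Rightarrow> nat" where
  "knot 0 = 0"
| "knot (Suc j) = (SOME y. 2 * knot j < y \<and> \<bar>e y\<bar> \<le> \<delta> / (4 * Suc j) * y
      \<and> \<bar>e (knot j)\<bar> \<le> \<delta> / (4 * Suc j) * y)"

declare knot.simps(2) [simp del]

lemma knot_Suc:
  "2 * knot j < knot (Suc j)"
  "\<bar>e (knot (Suc j))\<bar> \<le> \<delta> / (4 * Suc j) * knot (Suc j)"
  "\<bar>e (knot j)\<bar> \<le> \<delta> / (4 * Suc j) * knot (Suc j)"
  using someI_ex[OF next_knot_exists[of "knot j" j]] unfolding knot.simps(2) by simp_all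

lemma strict_mono_knot: "strict_mono knot"
  unfolding strict_mono_Suc_iff using knot_Suc(1) by (metis le_less_trans mult_2 le_add1)

definition slope :: "nat \<Rightarrow> real" where
  "slope j = (e (knot (Suc j)) - e (knot j)) / (real (knot (Suc j)) - real (knot j))"

lemma abs_slope_le: "\<bar>slope j\<bar> \<le> \<delta> / Suc j"
proof -
  define d where "d = \<delta> / (4 * Suc j)"
  define a b where "a = real (knot j)" and "b = real (knot (Suc j))"
  have "2 * a < b"
    unfolding a_def b_def using knot_Suc(1)[of j] by (metis of_nat_less_iff of_nat_mult of_nat_numeral)
  then have gap: "0 < b - a" "b \<le> 2 * (b - a)"
    using a_def by auto
  have "\<bar>e (knot (Suc j)) - e (knot j)\<bar> \<le> 2 * d * b"
    using knot_Suc(2,3)[of j] unfolding d_def b_def by linarith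
  also have "\<dots> \<le> 2 * d * (2 * (b - a))"
    using gap(2) delta_pos by (intro mult_left_mono) (simp_all add: d_def)
  also have "\<dots> = \<delta> / Suc j * (b - a)"
    by (simp add: d_def field_simps)
  finally have "\<bar>e (knot (Suc j)) - e (knot j)\<bar> \<le> \<delta> / Suc j * (b - a)" .
  moreover have "slope j = (e (knot (Suc j)) - e (knot j)) / (b - a)"
    by (simp add: slope_def a_def b_def)
  ultimately show ?thesis
    using gap(1) by (simp add: abs_divide pos_divide_le_eq)
qed

definition segment :: "nat \<Rightarrow> nat" where
  "segment n = (LEAST j. n < knot (Suc j))"

lemma knot_segment: "knot (segment n) \<le> n" "n < knot (Suc (segment n))"
proof -
  have "\<exists>j. n < knot (Suc j)"
    using strict_mono_imp_increasing[OF strict_mono_knot, of "Suc n"] by (auto simp: Suc_le_eq)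
  then show "n < knot (Suc (segment n))"
    unfolding segment_def by (rule LeastI_ex)
  show "knot (segment n) \<le> n"
  proof (cases "segment n")
    case (Suc j)
    then have "\<not> n < knot (Suc j)"
      unfolding segment_def by (metis lessI not_less_Least)
    with Suc show ?thesis
      by simp
  qed simp
qed

lemma le_segment_iff: "j \<le> segment n \<longleftrightarrow> knot j \<le> n"
  using knot_segment[of n] strict_mono_less_eq[OF strict_mono_knot, of j "segment n"]
    strict_mono_less[OF strict_mono_knot, of j "Suc (segment n)"]
  by auto

lemma segment_eq: "knot j \<le> n \<Longrightarrow> n < knot (Suc j) \<Longrightarrow> segment n = j"
  using le_segment_iff[of j n] le_segment_iff[of "Suc j" n] by auto

definition interp :: "nat \<Rightarrow> real" where
  "interp n = (\<Sum>i<n. slope (segment i))"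

lemma interp_Suc: "interp (Suc n) = interp n + slope (segment n)"
  by (simp add: interp_def)

lemma interp_knot_add:
  "k \<le> knot (Suc j) - knot j \<Longrightarrow> interp (knot j + k) = interp (knot j) + k * slope j"
proof (induction k)
  case (Suc k)
  then have "segment (knot j + k) = j"
    by (intro segment_eq) auto
  with Suc show ?case
    by (simp add: interp_Suc algebra_simps)
qed simp

lemma interp_knot:
  assumes "e 0 = 0"
  shows "interp (knot j) = e (knot j)"
proof (induction j)
  case (Suc j)
  have le: "knot j \<le> knot (Suc j)"
    using strict_mono_knot by (simp add: strict_mono_less_eq)
  then have "interp (knot (Suc j)) = interp (knot j) + (knot (Suc j) - knot j) * slope j"
    using interp_knot_add[of "knot (Suc j) - knot j" j] by simp
  also have "\<dots> = e (knot (Suc j))"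
    using Suc le strict_mono_knot by (simp add: slope_def of_nat_diff strict_mono_less)
  finally show ?case .
qed (simp add: interp_def assms)

lemma abs_interp_step_le: "\<bar>interp (Suc n) - interp n\<bar> \<le> \<delta>"
proof -
  have "\<bar>slope (segment n)\<bar> \<le> \<delta> / Suc (segment n)"
    by (rule abs_slope_le)
  also have "\<dots> \<le> \<delta>"
    using delta_pos by (simp add: divide_le_eq)
  finally show ?thesis
    by (simp add: interp_Suc)
qed

lemma interp_step_tendsto: "(\<lambda>n. interp (Suc n) - interp n) \<longlonglongrightarrow> 0"
proof -
  have "slope \<longlonglongrightarrow> 0"
  proof (rule Lim_null_comparison)
    show "\<forall>\<^sub>F j in sequentially. norm (slope j) \<le> \<delta> / Suc j"
      by (intro always_eventually allI) (metis abs_slope_le real_norm_def)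
    show "(\<lambda>j. \<delta> / Suc j) \<longlonglongrightarrow> 0"
      by (rule LIMSEQ_Suc[OF lim_const_over_n])
  qed
  moreover have "filterlim segment at_top sequentially"
    unfolding filterlim_at_top
    by (metis (mono_tags) eventually_ge_at_top le_segment_iff eventually_mono)
  ultimately have "(\<lambda>n. slope (segment n)) \<longlonglongrightarrow> 0"
    by (rule filterlim_compose)
  then show ?thesis
    by (simp add: interp_Suc)
qed

end

lemma sublinear_interpolation:
  fixes e :: "nat \<Rightarrow> real"
  assumes "0 < \<delta>" and "e 0 = 0" and "(\<lambda>n. e n / n) \<longlonglongrightarrow> 0"
  obtains r :: "nat \<Rightarrow> nat" and g :: "nat \<Rightarrow> real"
  where "strict_mono r" "g 0 = 0" "\<And>j. g (r j) = e (r j)"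
    "\<And>n. \<bar>g (Suc n) - g n\<bar> \<le> \<delta>" "(\<lambda>n. g (Suc n) - g n) \<longlonglongrightarrow> 0"
proof -
  interpret piecewise_linear_interpolation e \<delta>
    using assms by unfold_locales
  show ?thesis
  proof (rule that[of knot interp])
    show "interp 0 = 0"
      by (simp add: interp_def)
  qed (simp_all add: strict_mono_knot interp_knot assms abs_interp_step_le interp_step_tendsto)
qed

lemma floor_diff_near:
  fixes t :: real
  obtains \<epsilon> where "0 < \<epsilon>" "\<And>x y. \<bar>y - x - t\<bar> < \<epsilon> \<Longrightarrow> \<bar>of_int (\<lfloor>y\<rfloor> - \<lfloor>x\<rfloor>) - t\<bar> \<le> 1"
proof
  define \<epsilon> where "\<epsilon> = min (of_int \<lfloor>t + 1\<rfloor> + 1 - (t + 1)) ((t - 1) - of_int \<lceil>t - 1\<rceil> + 1)"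
  show "0 < \<epsilon>"
    unfolding \<epsilon>_def by linarith
  fix x y :: real
  assume close: "\<bar>y - x - t\<bar> < \<epsilon>"
  define k where "k = \<lfloor>y\<rfloor> - \<lfloor>x\<rfloor>"
  have "of_int k < y - x + 1" "y - x - 1 < of_int k"
    unfolding k_def by linarith+
  moreover have "y - x - t < of_int \<lfloor>t + 1\<rfloor> + 1 - (t + 1)"
    "t - (y - x) < (t - 1) - of_int \<lceil>t - 1\<rceil> + 1"
    using close by (simp_all add: \<epsilon>_def abs_less_iff)
  ultimately have "of_int k < of_int \<lfloor>t + 1\<rfloor> + (1 :: real)" "of_int \<lceil>t - 1\<rceil> - 1 < (of_int k :: real)"
    by linarith+
  then have "k \<le> \<lfloor>t + 1\<rfloor>" "\<lceil>t - 1\<rceil> \<le> k"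
    by linarith+
  then show "\<bar>of_int (\<lfloor>y\<rfloor> - \<lfloor>x\<rfloor>) - t\<bar> \<le> 1"
    unfolding k_def[symmetric] by linarith
qed

lemma tendsto_shift_diff:
  fixes g :: "nat \<Rightarrow> 'a::real_normed_vector"
  assumes "(\<lambda>n. g (Suc n) - g n) \<longlonglongrightarrow> 0"
  shows "(\<lambda>n. g (n + m) - g n) \<longlonglongrightarrow> 0"
proof (induction m)
  case (Suc m)
  have "(\<lambda>n. (g (Suc (n + m)) - g (n + m)) + (g (n + m) - g n)) \<longlonglongrightarrow> 0 + 0"
    by (intro tendsto_add Suc LIMSEQ_ignore_initial_segment[OF assms])
  then show ?case
    by simp
qed simp

lemma floor_slowly_varying:
  fixes g :: "nat \<Rightarrow> real" and c :: real and f :: "nat \<Rightarrow> nat"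
  assumes step: "\<And>n. g n - g (Suc n) \<le> c" and g0: "g 0 = 0"
    and lim: "(\<lambda>n. g (Suc n) - g n) \<longlonglongrightarrow> 0"
  defines "f \<equiv> \<lambda>n. nat \<lfloor>c * n + g n\<rfloor>"
  shows "mono f" and "\<forall>m. \<exists>N. \<forall>n\<ge>N. \<bar>real (f (n + m)) - real (f n) - c * m\<bar> \<le> 1"
proof -
  define h where "h n = c * n + g n" for n
  have "mono h"
    unfolding mono_iff_le_Suc h_def using step by (simp add: algebra_simps)
  then have "0 \<le> h n" for n
    using g0 monoD[of h 0 n] by (simp add: h_def)
  then have f_eq: "real (f n) = of_int \<lfloor>h n\<rfloor>" for n
    by (simp add: f_def h_def)
  show "mono f"
    unfolding f_def using \<open>mono h\<close>
    by (auto intro!: monoI nat_mono floor_mono dest: monoD simp: h_def)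
  show "\<forall>m. \<exists>N. \<forall>n\<ge>N. \<bar>real (f (n + m)) - real (f n) - c * m\<bar> \<le> 1"
  proof
    fix m :: nat
    obtain \<epsilon> where \<epsilon>: "0 < \<epsilon>"
      "\<And>x y. \<bar>y - x - c * m\<bar> < \<epsilon> \<Longrightarrow> \<bar>of_int (\<lfloor>y\<rfloor> - \<lfloor>x\<rfloor>) - c * m\<bar> \<le> 1"
      using floor_diff_near[of "c * m"] by blast
    have "\<forall>\<^sub>F n in sequentially. \<bar>g (n + m) - g n\<bar> < \<epsilon>"
      using tendsto_shift_diff[OF lim, of m] \<open>0 < \<epsilon>\<close> by (auto simp: tendsto_iff dist_real_def)
    then obtain N where N: "\<And>n. N \<le> n \<Longrightarrow> \<bar>h (n + m) - h n - c * m\<bar> < \<epsilon>"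
      by (auto simp: eventually_sequentially h_def algebra_simps)
    show "\<exists>N. \<forall>n\<ge>N. \<bar>real (f (n + m)) - real (f n) - c * m\<bar> \<le> 1"
      using \<epsilon>(2)[OF N] by (auto simp: f_eq)
  qed
qed

lemma regularize_along_subsequence:
  fixes s :: "nat \<Rightarrow> nat" and c :: real
  assumes "0 < c" and "s 0 = 0" and slope: "(\<lambda>r. s r / r) \<longlonglongrightarrow> c"
  obtains f r :: "nat \<Rightarrow> nat"
  where "mono f" "strict_mono r" "f 0 = 0" "\<And>j. f (r j) = s (r j)"
    "\<forall>m. \<exists>N. \<forall>n\<ge>N. \<bar>real (f (n + m)) - real (f n) - c * m\<bar> \<le> 1"
proof -
  define e where "e r = real (s r) - c * r" for r
  from tendsto_diff[OF slope tendsto_const[of c]] have "(\<lambda>r. s r / r - c) \<longlonglongrightarrow> 0"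
    by simp
  then have e_sublinear: "(\<lambda>r. e r / r) \<longlonglongrightarrow> 0"
    by (rule Lim_transform_eventually)
      (use eventually_gt_at_top[of 0] in \<open>eventually_elim, simp add: e_def field_simps\<close>)
  have "e 0 = 0"
    using \<open>s 0 = 0\<close> by (simp add: e_def)
  obtain r :: "nat \<Rightarrow> nat" and g :: "nat \<Rightarrow> real"
    where r: "strict_mono r" and g: "g 0 = 0" "\<And>j. g (r j) = e (r j)"
      "\<And>n. \<bar>g (Suc n) - g n\<bar> \<le> c" "(\<lambda>n. g (Suc n) - g n) \<longlonglongrightarrow> 0"
    using sublinear_interpolation[OF \<open>0 < c\<close> \<open>e 0 = 0\<close> e_sublinear] by blast
  define f where "f n = nat \<lfloor>c * n + g n\<rfloor>" for n
  have "g n - g (Suc n) \<le> c" for n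
    using g(3)[of n] by linarith
  note f = floor_slowly_varying[OF this g(1,4), folded f_def]
  show ?thesis
  proof (rule that[OF f(1) r _ _ f(2)])
    show "f 0 = 0"
      by (simp add: f_def g(1))
    show "f (r j) = s (r j)" for j
      by (simp add: f_def g(2) e_def)
  qed
qed

lemma regular_matching_radii:
  fixes v w :: "nat \<Rightarrow> nat"
  assumes v_pos: "\<And>n. 1 \<le> v n" and w_pos: "\<And>n. 1 \<le> w n" and "v 0 = 1" and "w 0 = 1"
    and "mono w" and w_submult: "\<And>m n. w (m + n) \<le> w m * w n"
    and v_rate: "(\<lambda>n. ln (v n) / n) \<longlonglongrightarrow> \<alpha>" "0 < \<alpha>"
    and w_rate: "(\<lambda>n. ln (w n) / n) \<longlonglongrightarrow> \<beta>" "0 < \<beta>"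
  obtains f r :: "nat \<Rightarrow> nat"
  where "mono f" "strict_mono r" "f 0 = 0"
    "\<And>j. v (r j) \<le> w (f (r j))" "\<And>j. w (f (r j)) \<le> w 1 * v (r j)"
    "\<forall>m. \<exists>N. \<forall>n\<ge>N. \<bar>real (f (n + m)) - real (f n) - \<alpha> / \<beta> * m\<bar> \<le> 1"
proof -
  define s where "s r = catch_up w (v r)" for r
  have reach: "\<exists>t. x \<le> w t" for x
    using w_pos w_rate by (rule ln_rate_pos_reaches)
  have lower: "v r \<le> w (s r)" for r
    using reach[of "v r"] catch_up_reaches[of "v r" w] unfolding s_def by blast
  have step: "w (Suc n) \<le> w 1 * w n" for n
    using w_submult[of 1 n] by simp
  have upper: "w (s r) \<le> w 1 * v r" for r
    unfolding s_def using step by (rule catch_up_overshoot) (use \<open>w 0 = 1\<close> w_pos v_pos in auto)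
  have "filterlim s at_top sequentially"
    unfolding s_def using \<open>mono w\<close> reach
    by (rule filterlim_catch_up) (rule ln_rate_pos_imp_unbounded[OF v_pos v_rate])
  with v_pos w_pos lower upper have "(\<lambda>r. s r / r) \<longlonglongrightarrow> \<alpha> / \<beta>"
    using v_rate(1) w_rate by (rule matched_index_ratio)
  moreover have "s 0 = 0"
    using \<open>v 0 = 1\<close> \<open>w 0 = 1\<close> by (simp add: s_def catch_up_eq_0)
  moreover have "0 < \<alpha> / \<beta>"
    using v_rate(2) w_rate(2) by simp
  ultimately obtain f r :: "nat \<Rightarrow> nat" where f: "mono f" "strict_mono r" "f 0 = 0"
    and f_eq: "\<And>j. f (r j) = s (r j)"
    and regular: "\<forall>m. \<exists>N. \<forall>n\<ge>N. \<bar>real (f (n + m)) - real (f n) - \<alpha> / \<beta> * m\<bar> \<le> 1"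
    using regularize_along_subsequence by blast
  show ?thesis
    by (rule that[OF f _ _ regular]) (use lower upper in \<open>simp_all add: f_eq\<close>)
qed

theorem lemma3p1:
  fixes G :: "('a, 'c) monoid_scheme" and G' :: "('b, 'd) monoid_scheme"
    and S :: "'a set" and S' :: "'b set"
  assumes "group G" and "group G'"
    and "fin_gen_set G S" and "fin_gen_set G' S'"
    and "growth_rate G S > 1" and "growth_rate G' S' > 1"
  shows "\<exists>(f :: nat \<Rightarrow> nat) (r :: nat \<Rightarrow> nat).
           mono f \<and> strict_mono r \<and> f 0 = 0
         \<and> bdd_above (range (\<lambda>n. real (ball_card G' S' (f (r n))) / real (ball_card G S (r n))))
         \<and> (\<exists>\<epsilon>>0. \<forall>n. real (ball_card G' S' (f (r n))) / real (ball_card G S (r n)) \<ge> \<epsilon>)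
         \<and> (\<forall>m. \<exists>N. \<forall>n\<ge>N.
              \<bar>real (f (n + m)) - real (f n)
                 - (ln (growth_rate G S) / ln (growth_rate G' S')) * real m\<bar> \<le> 1)"
proof -
  let ?v = "ball_card G S" and ?w = "ball_card G' S'"
  interpret G: group G by fact
  interpret G': group G' by fact
  have rates_pos: "0 < ln (growth_rate G S)" "0 < ln (growth_rate G' S')"
    using assms(5,6) by simp_all
  obtain f r :: "nat \<Rightarrow> nat" where f: "mono f" "strict_mono r" "f 0 = 0"
    and bounds: "\<And>j. ?v (r j) \<le> ?w (f (r j))" "\<And>j. ?w (f (r j)) \<le> ?w 1 * ?v (r j)"
    and regular: "\<forall>m. \<exists>N. \<forall>n\<ge>N. \<bar>real (f (n + m)) - real (f n)
                 - (ln (growth_rate G S) / ln (growth_rate G' S')) * real m\<bar> \<le> 1"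
    using regular_matching_radii[OF G.ball_card_pos[OF assms(3)] G'.ball_card_pos[OF assms(4)]
      ball_card_0 ball_card_0 G'.mono_ball_card[OF assms(4)] G'.ball_card_add_le[OF assms(4)]
      G.ln_ball_card_rate[OF assms(3)] rates_pos(1) G'.ln_ball_card_rate[OF assms(4)] rates_pos(2)]
    by blast
  have ratio: "1 \<le> real (?w (f (r n))) / ?v (r n)" "real (?w (f (r n))) / ?v (r n) \<le> ?w 1" for n
    using bounds[of n] G.ball_card_pos[OF assms(3), of "r n"]
    by (simp_all add: field_simps) (metis of_nat_le_iff of_nat_mult)
  have "bdd_above (range (\<lambda>n. real (?w (f (r n))) / ?v (r n)))"
    by (rule bdd_aboveI2, rule ratio(2))
  moreover have "\<exists>\<epsilon>>0. \<forall>n. real (?w (f (r n))) / ?v (r n) \<ge> \<epsilon>"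
    using ratio(1) by (intro exI[of _ 1]) auto
  ultimately show ?thesis
    using f regular by blast
qed

end
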